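(* Let $(r_n),(R_n)$ be real sequences and $(C_n),(D_n),(d_n)$ complex sequences with $\sum_n(|C_n|^2+|d_nD_n|^2)<\infty$. Assume $r_n\to\chi$ for some $\chi<0$, and that there are $n'\in\mathbb{N}$, $\mu>0$, $\nu>1/2$ with $|R_n|\le\mu n^{-\nu}(|C_n|^2+|d_nD_n|^2)^{1/2}$ for all $n\ge n'$. Then for every $\varepsilon\in(0,1)$ and $T>0$ there exists $n_0=n_0(\varepsilon)\in\mathbb{N}$, independent of $T$ and of the coefficients, such that $$\int_0^\infty k(t)\Big|\sum_{n=n_0}^\infty R_ne^{r_nt}\Big|^2dt\le\varepsilon\,\pi T\sum_{n=n_0}^\infty\frac{|C_n|^2+|d_nD_n|^2}{\pi^2+T^2r_n^2}.$$
   Context: For $T>0$, $k(t):=\sin(\pi t/T)$ for $t\in[0,T]$ and $k(t):=0$ otherwise. *)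

theory Defs
  imports "HOL-Analysis.Analysis"
begin

definition kwin :: "real \<Rightarrow> real \<Rightarrow> real" where
  "kwin T t = (if 0 \<le> t \<and> t \<le> T then sin (pi * t / T) else 0)"

end

theory Submission
  imports Defs
begin

(* With x_n = mu n^(-nu) and a_n = |C_n|^2 + |d_n D_n|^2 we have |R_n| <= x_n sqrt a_n, so by
   Cauchy-Schwarz  |sum R_n e^(r_n t)|^2 <= (sum x_n^2) (sum a_n e^(2 r_n t)).  For r <= 0 the
   explicit integral  int_0^T sin(pi t/T) e^(2rt) dt  is at most 2 pi T / (pi^2 + T^2 r^2), so
   integrating termwise (monotone convergence on partial sums) bounds the left-hand side by
   2 (sum_{n >= n0} x_n^2) pi T sum_{n >= n0} a_n / (pi^2 + T^2 r_n^2).  As nu > 1/2 the tail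
   sum_{n >= n0} x_n^2 tends to 0, and r_n < 0 eventually, so n0 depends only on epsilon. *)

lemma sin_exp_has_integral:
  fixes T s :: real
  assumes T: "T > 0"
  shows "((\<lambda>t. sin (pi * t / T) * exp (s * t)) has_integral
           pi * T * (1 + exp (s * T)) / (pi\<^sup>2 + s\<^sup>2 * T\<^sup>2)) {0..T}"
proof -
  define w where "w = pi / T"
  have w: "w > 0" "w * T = pi" using T by (simp_all add: w_def)
  have D: "s\<^sup>2 + w\<^sup>2 > 0" using w by (simp add: add_nonneg_pos)
  define F where "F t = exp (s * t) * (s * sin (w * t) - w * cos (w * t)) / (s\<^sup>2 + w\<^sup>2)" for t
  have "((\<lambda>t. sin (w * t) * exp (s * t)) has_integral (F T - F 0)) {0..T}"
  proof (rule fundamental_theorem_of_calculus)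
    fix x
    have "(F has_real_derivative (exp (s * x) * s * (s * sin (w * x) - w * cos (w * x))
            + exp (s * x) * (s * (cos (w * x) * w) + w * (sin (w * x) * w))) / (s\<^sup>2 + w\<^sup>2))
            (at x within {0..T})"
      unfolding F_def using D by (auto intro!: derivative_eq_intros)
    moreover have "exp (s * x) * s * (s * sin (w * x) - w * cos (w * x))
            + exp (s * x) * (s * (cos (w * x) * w) + w * (sin (w * x) * w))
          = (s\<^sup>2 + w\<^sup>2) * (sin (w * x) * exp (s * x))"
      by (simp add: algebra_simps power2_eq_square)
    ultimately have "(F has_real_derivative sin (w * x) * exp (s * x)) (at x within {0..T})"
      using w(1) by simp
    then show "(F has_vector_derivative sin (w * x) * exp (s * x)) (at x within {0..T})"
      by (simp add: has_real_derivative_iff_has_vector_derivative)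
  qed (use T in simp)
  moreover have "F T - F 0 = (1 + exp (s * T)) * (w / (s\<^sup>2 + w\<^sup>2))"
  proof -
    have "sin (w * T) = 0" "cos (w * T) = -1" using w(2) by simp_all
    then show ?thesis by (simp add: F_def mult.commute distrib_left add_divide_distrib add.commute)
  qed
  moreover have "w / (s\<^sup>2 + w\<^sup>2) = pi * T / (pi\<^sup>2 + s\<^sup>2 * T\<^sup>2)"
    using T by (simp add: w_def field_simps power2_eq_square)
  moreover have "w * t = pi * t / T" for t by (simp add: w_def)
  ultimately show ?thesis by (simp add: ac_simps)
qed

lemma kwin_nonneg:
  assumes "T > 0"
  shows "kwin T t \<ge> 0"
proof (cases "0 \<le> t \<and> t \<le> T")
  case True
  then have "0 \<le> pi * t / T" "pi * t / T \<le> pi" using assms by (simp_all add: field_simps)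
  with True show ?thesis by (simp add: kwin_def sin_ge_zero)
qed (auto simp: kwin_def)

lemma kwin_has_integral:
  assumes "((\<lambda>t. sin (pi * t / T) * f t) has_integral I) {0..T}"
  shows "((\<lambda>t. kwin T t * f t) has_integral I) {0..}"
proof (rule has_integral_on_superset)
  show "((\<lambda>t. kwin T t * f t) has_integral I) {0..T}"
    using assms by (rule has_integral_eq[rotated]) (simp add: kwin_def)
qed (auto simp: kwin_def)

lemma kwin_exp_has_integral_le:
  assumes "T > 0" and "s \<le> 0"
  obtains I where "((\<lambda>t. kwin T t * exp (2 * s * t)) has_integral I) {0..}"
    and "I \<le> 2 * pi * T / (pi\<^sup>2 + T\<^sup>2 * s\<^sup>2)"
proof
  show "((\<lambda>t. kwin T t * exp (2 * s * t)) has_integral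
          pi * T * (1 + exp (2 * s * T)) / (pi\<^sup>2 + (2 * s)\<^sup>2 * T\<^sup>2)) {0..}"
    by (rule kwin_has_integral sin_exp_has_integral assms)+
  have "exp (2 * s * T) \<le> 1" using assms by (simp add: mult_nonpos_nonneg)
  moreover have "pi\<^sup>2 + T\<^sup>2 * s\<^sup>2 \<le> pi\<^sup>2 + (2 * s)\<^sup>2 * T\<^sup>2" by (simp add: power_mult_distrib)
  moreover have "pi\<^sup>2 + T\<^sup>2 * s\<^sup>2 > 0" by (simp add: add_pos_nonneg)
  ultimately show "pi * T * (1 + exp (2 * s * T)) / (pi\<^sup>2 + (2 * s)\<^sup>2 * T\<^sup>2)
                     \<le> 2 * pi * T / (pi\<^sup>2 + T\<^sup>2 * s\<^sup>2)"
    using assms(1) by (intro frac_le) (auto intro: mult_left_mono)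
qed

lemma summable_abs_of_le_mult_sqrt:
  fixes c x a :: "nat \<Rightarrow> real"
  assumes c: "\<And>n. \<bar>c n\<bar> \<le> x n * sqrt (a n)" and a: "\<And>n. a n \<ge> 0"
    and "summable (\<lambda>n. (x n)\<^sup>2)" and "summable a"
  shows "summable (\<lambda>n. \<bar>c n\<bar>)"
proof (rule summable_comparison_test)
  have "x n * sqrt (a n) \<le> ((x n)\<^sup>2 + a n) / 2" for n
  proof -
    have "0 \<le> (x n - sqrt (a n))\<^sup>2" by simp
    then show ?thesis using a[of n] by (simp add: power2_diff)
  qed
  with c show "\<exists>N. \<forall>n\<ge>N. norm \<bar>c n\<bar> \<le> ((x n)\<^sup>2 + a n) / 2" by (metis order_trans real_norm_def abs_abs)
  show "summable (\<lambda>n. ((x n)\<^sup>2 + a n) / 2)" using assms by (intro summable_divide summable_add)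
qed

lemma Cauchy_Schwarz_partial_sum_le:
  fixes c x a e :: "nat \<Rightarrow> real"
  assumes c: "\<And>n. \<bar>c n\<bar> \<le> x n * sqrt (a n)" and a: "\<And>n. a n \<ge> 0" and e: "\<And>n. e n \<ge> 0"
    and x: "summable (\<lambda>n. (x n)\<^sup>2)"
  shows "(\<Sum>n<N. \<bar>c n\<bar> * e n)\<^sup>2 \<le> (\<Sum>n. (x n)\<^sup>2) * (\<Sum>n<N. a n * (e n)\<^sup>2)"
proof -
  have "(\<Sum>n<N. \<bar>c n\<bar> * e n) \<le> (\<Sum>n<N. x n * (sqrt (a n) * e n))"
    using c e by (intro sum_mono) (simp add: mult.assoc[symmetric] mult_right_mono)
  then have "(\<Sum>n<N. \<bar>c n\<bar> * e n)\<^sup>2 \<le> (\<Sum>n<N. x n * (sqrt (a n) * e n))\<^sup>2"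
    using e by (intro power_mono) (auto intro: sum_nonneg)
  also have "\<dots> \<le> (\<Sum>n<N. (x n)\<^sup>2) * (\<Sum>n<N. (sqrt (a n) * e n)\<^sup>2)"
    by (rule Cauchy_Schwarz_ineq_sum)
  also have "(\<Sum>n<N. (sqrt (a n) * e n)\<^sup>2) = (\<Sum>n<N. a n * (e n)\<^sup>2)"
    using a by (simp add: power_mult_distrib)
  also have "(\<Sum>n<N. (x n)\<^sup>2) * \<dots> \<le> (\<Sum>n. (x n)\<^sup>2) * (\<Sum>n<N. a n * (e n)\<^sup>2)"
    using a x by (intro mult_right_mono sum_le_suminf sum_nonneg) auto
  finally show ?thesis .
qed

lemma integral_le_monotone_limit:
  fixes f :: "nat \<Rightarrow> 'n::euclidean_space \<Rightarrow> real"
  assumes int: "\<And>k. f k integrable_on S"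
    and mono: "\<And>k x. x \<in> S \<Longrightarrow> f k x \<le> f (Suc k) x"
    and lim: "\<And>x. x \<in> S \<Longrightarrow> (\<lambda>k. f k x) \<longlonglongrightarrow> g x"
    and le: "\<And>k. integral S (f k) \<le> M"
  shows "g integrable_on S \<and> integral S g \<le> M"
proof -
  have "incseq (\<lambda>k. integral S (f k))"
    by (rule incseq_SucI) (use int mono in \<open>auto intro: integral_le\<close>)
  then have "integral S (f 0) \<le> integral S (f k)" for k by (simp add: incseq_def)
  then have "norm (integral S (f k)) \<le> max \<bar>integral S (f 0)\<bar> \<bar>M\<bar>" for k
    using le[of k] by (smt (verit) real_norm_def)
  then have "bounded (range (\<lambda>k. integral S (f k)))" by (auto intro!: boundedI)
  from monotone_convergence_increasing[OF int mono lim this]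
  show ?thesis using le by (auto intro: LIMSEQ_le_const2)
qed

lemma summable_div_pi_sq_plus:
  fixes a \<rho> :: "nat \<Rightarrow> real"
  assumes "summable a" and "\<And>n. a n \<ge> 0"
  shows "summable (\<lambda>n. a n / (pi\<^sup>2 + T\<^sup>2 * (\<rho> n)\<^sup>2))"
proof (rule summable_comparison_test)
  show "summable (\<lambda>n. a n / pi\<^sup>2)" using assms(1) by (rule summable_divide)
  show "\<exists>N. \<forall>n\<ge>N. norm (a n / (pi\<^sup>2 + T\<^sup>2 * (\<rho> n)\<^sup>2)) \<le> a n / pi\<^sup>2"
    using assms(2) by (auto intro!: divide_left_mono simp: add_pos_nonneg)
qed

lemma kwin_integral_partial_sum_square_le:
  fixes c \<rho> x a :: "nat \<Rightarrow> real" and N :: nat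
  assumes T: "T > 0" and \<rho>: "\<And>n. \<rho> n \<le> 0"
    and c: "\<And>n. \<bar>c n\<bar> \<le> x n * sqrt (a n)" and a: "\<And>n. a n \<ge> 0"
    and x: "summable (\<lambda>n. (x n)\<^sup>2)" and a_sum: "summable a"
  defines "u \<equiv> \<lambda>t. \<Sum>n<N. \<bar>c n\<bar> * exp (\<rho> n * t)"
  shows "(\<lambda>t. kwin T t * (u t)\<^sup>2) integrable_on {0..}"
    and "integral {0..} (\<lambda>t. kwin T t * (u t)\<^sup>2)
           \<le> (\<Sum>n. (x n)\<^sup>2) * (2 * pi * T * (\<Sum>n. a n / (pi\<^sup>2 + T\<^sup>2 * (\<rho> n)\<^sup>2)))"
proof -
  define S where "S = (\<Sum>n. (x n)\<^sup>2)"
  define b where "b n = a n / (pi\<^sup>2 + T\<^sup>2 * (\<rho> n)\<^sup>2)" for n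
  have S: "S \<ge> 0" unfolding S_def using x by (simp add: suminf_nonneg)
  have "\<forall>n. \<exists>J. ((\<lambda>t. kwin T t * exp (2 * \<rho> n * t)) has_integral J) {0..}
                \<and> J \<le> 2 * pi * T / (pi\<^sup>2 + T\<^sup>2 * (\<rho> n)\<^sup>2)"
    using kwin_exp_has_integral_le[OF T \<rho>] by blast
  then obtain I where I: "\<And>n. ((\<lambda>t. kwin T t * exp (2 * \<rho> n * t)) has_integral I n) {0..}"
    and I_le: "\<And>n. I n \<le> 2 * pi * T / (pi\<^sup>2 + T\<^sup>2 * (\<rho> n)\<^sup>2)"
    by metis
  define v where "v t = S * (\<Sum>n<N. a n * (exp (\<rho> n * t))\<^sup>2)" for t
  have v: "((\<lambda>t. kwin T t * v t) has_integral S * (\<Sum>n<N. a n * I n)) {0..}"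
  proof -
    have "((\<lambda>t. \<Sum>n<N. S * a n * (kwin T t * exp (2 * \<rho> n * t))) has_integral
            (\<Sum>n<N. S * a n * I n)) {0..}"
      using I by (intro has_integral_sum has_integral_mult_right) auto
    moreover have "exp (2 * \<rho> n * t) = (exp (\<rho> n * t))\<^sup>2" for n t
      by (simp add: exp_double[symmetric] mult.assoc)
    ultimately show ?thesis
      by (simp add: v_def sum_distrib_left ac_simps)
  qed
  show int: "(\<lambda>t. kwin T t * (u t)\<^sup>2) integrable_on {0..}"
  proof -
    have "continuous_on {0..T} (\<lambda>t. sin (pi * t / T) * (u t)\<^sup>2)"
      unfolding u_def using T by (intro continuous_intros) auto
    then have "((\<lambda>t. sin (pi * t / T) * (u t)\<^sup>2) has_integral
                 integral {0..T} (\<lambda>t. sin (pi * t / T) * (u t)\<^sup>2)) {0..T}"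
      using integrable_continuous_interval by blast
    from kwin_has_integral[OF this] show ?thesis by blast
  qed
  have "integral {0..} (\<lambda>t. kwin T t * (u t)\<^sup>2) \<le> integral {0..} (\<lambda>t. kwin T t * v t)"
    using int v Cauchy_Schwarz_partial_sum_le[OF c a _ x] kwin_nonneg[OF T]
    by (intro integral_le mult_left_mono) (auto simp: u_def v_def S_def)
  also have "\<dots> = S * (\<Sum>n<N. a n * I n)" using v by (rule integral_unique)
  also have "\<dots> \<le> S * (\<Sum>n<N. 2 * pi * T * b n)"
    using S mult_left_mono[OF I_le a] by (intro mult_left_mono sum_mono) (simp add: b_def ac_simps)
  also have "\<dots> \<le> S * (2 * pi * T * (\<Sum>n. b n))"
    using S T a summable_div_pi_sq_plus[OF a_sum a]
    by (simp only: sum_distrib_left[symmetric]) (intro mult_left_mono sum_le_suminf, auto simp: b_def)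
  finally show "integral {0..} (\<lambda>t. kwin T t * (u t)\<^sup>2) \<le> S * (2 * pi * T * (\<Sum>n. b n))" .
qed

lemma kwin_integral_series_square_le:
  fixes c \<rho> x a :: "nat \<Rightarrow> real"
  assumes T: "T > 0" and \<rho>: "\<And>n. \<rho> n \<le> 0"
    and c: "\<And>n. \<bar>c n\<bar> \<le> x n * sqrt (a n)" and a: "\<And>n. a n \<ge> 0"
    and x: "summable (\<lambda>n. (x n)\<^sup>2)" and a_sum: "summable a"
  shows "integral {0..} (\<lambda>t. kwin T t * (\<bar>\<Sum>n. c n * exp (\<rho> n * t)\<bar>)\<^sup>2)
           \<le> (\<Sum>n. (x n)\<^sup>2) * (2 * pi * T * (\<Sum>n. a n / (pi\<^sup>2 + T\<^sup>2 * (\<rho> n)\<^sup>2)))"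
    (is "integral _ ?L \<le> ?M")
proof -
  define u where "u N t = (\<Sum>n<N. \<bar>c n\<bar> * exp (\<rho> n * t))" for N t
  define U where "U t = (\<Sum>n. \<bar>c n\<bar> * exp (\<rho> n * t))" for t
  have U_sum: "summable (\<lambda>n. \<bar>c n\<bar> * exp (\<rho> n * t))" if "t \<ge> 0" for t
  proof (rule summable_comparison_test)
    show "summable (\<lambda>n. \<bar>c n\<bar>)" using c a x a_sum by (rule summable_abs_of_le_mult_sqrt)
    have "\<bar>c n\<bar> * exp (\<rho> n * t) \<le> \<bar>c n\<bar>" for n
      using \<rho>[of n] that by (intro mult_left_le) (simp_all add: mult_nonpos_nonneg)
    then show "\<exists>N. \<forall>n\<ge>N. norm (\<bar>c n\<bar> * exp (\<rho> n * t)) \<le> \<bar>c n\<bar>" by simp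
  qed
  have U: "(\<lambda>t. kwin T t * (U t)\<^sup>2) integrable_on {0..}
           \<and> integral {0..} (\<lambda>t. kwin T t * (U t)\<^sup>2) \<le> ?M"
  proof (rule integral_le_monotone_limit)
    fix N
    show "(\<lambda>t. kwin T t * (u N t)\<^sup>2) integrable_on {0..}"
      and "integral {0..} (\<lambda>t. kwin T t * (u N t)\<^sup>2) \<le> ?M"
      unfolding u_def by (rule kwin_integral_partial_sum_square_le[where \<rho> = \<rho>, OF T \<rho> c a x a_sum])+
    fix t :: real
    have "0 \<le> u N t" "u N t \<le> u (Suc N) t" unfolding u_def by (simp_all add: sum_nonneg)
    then show "kwin T t * (u N t)\<^sup>2 \<le> kwin T t * (u (Suc N) t)\<^sup>2"
      using kwin_nonneg[OF T] by (intro mult_left_mono power_mono) auto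
  next
    fix t :: real
    assume "t \<in> {0..}"
    then have "(\<lambda>N. u N t) \<longlonglongrightarrow> U t" unfolding u_def U_def using U_sum by (auto intro: summable_LIMSEQ)
    then show "(\<lambda>N. kwin T t * (u N t)\<^sup>2) \<longlonglongrightarrow> kwin T t * (U t)\<^sup>2" by (intro tendsto_intros)
  qed
  have L_le_U: "?L t \<le> kwin T t * (U t)\<^sup>2" if "t \<in> {0..}" for t
  proof -
    have "\<bar>\<Sum>n. c n * exp (\<rho> n * t)\<bar> \<le> U t"
      using summable_rabs[of "\<lambda>n. c n * exp (\<rho> n * t)"] U_sum that by (simp add: U_def abs_mult)
    then show ?thesis using kwin_nonneg[OF T] by (intro mult_left_mono power_mono) auto
  qed
  show ?thesis
  proof (cases "?L integrable_on {0..}") \<comment> \<open>a non-integrable function has integral 0\<close>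
    case True
    then show ?thesis using U L_le_U by (meson integral_le order_trans)
  next
    case False
    have "0 \<le> ?M"
      using T a x summable_div_pi_sq_plus[OF a_sum a]
      by (intro mult_nonneg_nonneg suminf_nonneg) auto
    with False show ?thesis by (simp add: not_integrable_integral)
  qed
qed

lemma summable_square_powr:
  assumes "\<nu> > 1/2"
  shows "summable (\<lambda>n. (\<mu> * real n powr (- \<nu>))\<^sup>2)"
proof -
  have "summable (\<lambda>n. \<mu>\<^sup>2 * real n powr (- 2 * \<nu>))"
    using assms by (intro summable_mult) (simp add: summable_real_powr_iff)
  moreover have "(real n powr (- \<nu>))\<^sup>2 = real n powr (- 2 * \<nu>)" for n
    by (simp add: power2_eq_square powr_add[symmetric])
  ultimately show ?thesis by (simp add: power_mult_distrib)
qed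

lemma tail_start_exists:
  fixes r :: "nat \<Rightarrow> real"
  assumes "r \<longlonglongrightarrow> chi" and "chi < 0" and "\<nu> > 1/2" and "\<epsilon> > 0"
  shows "\<exists>n0. n' \<le> n0 \<and> 0 < n0 \<and> (\<forall>n\<ge>n0. r n \<le> 0)
               \<and> (\<Sum>n. (\<mu> * real (n + n0) powr (- \<nu>))\<^sup>2) \<le> \<epsilon> / 2"
proof -
  have "eventually (\<lambda>n. r n \<le> 0) sequentially"
    using order_tendstoD(2)[OF assms(1,2)] by eventually_elim simp
  moreover have "(\<lambda>n0. \<Sum>n. (\<mu> * real (n + n0) powr (- \<nu>))\<^sup>2) \<longlonglongrightarrow> 0"
    using summable_square_powr[OF assms(3)] by (rule suminf_exist_split2)
  then have "eventually (\<lambda>n0. (\<Sum>n. (\<mu> * real (n + n0) powr (- \<nu>))\<^sup>2) < \<epsilon> / 2) sequentially"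
    by (rule order_tendstoD(2)) (use assms(4) in simp)
  then have "eventually (\<lambda>n0. (\<Sum>n. (\<mu> * real (n + n0) powr (- \<nu>))\<^sup>2) \<le> \<epsilon> / 2) sequentially"
    by eventually_elim simp
  ultimately have "eventually (\<lambda>n0. n' \<le> n0 \<and> 0 < n0 \<and> (\<forall>n\<ge>n0. r n \<le> 0)
               \<and> (\<Sum>n. (\<mu> * real (n + n0) powr (- \<nu>))\<^sup>2) \<le> \<epsilon> / 2) sequentially"
    by (intro eventually_conj eventually_ge_at_top eventually_gt_at_top eventually_all_ge_at_top)
  then show ?thesis by (rule eventually_happens'[OF sequentially_bot])
qed

lemma kwin_tail_integral_le:
  fixes r R :: "nat \<Rightarrow> real" and C D d :: "nat \<Rightarrow> complex"
  assumes n0: "n' \<le> n0" "0 < n0" "\<forall>n\<ge>n0. r n \<le> 0"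
    and \<nu>: "\<nu> > 1/2" and tail: "(\<Sum>n. (\<mu> * real (n + n0) powr (- \<nu>))\<^sup>2) \<le> \<epsilon> / 2"
    and T: "T > 0"
    and CD: "summable (\<lambda>n. (cmod (C n))\<^sup>2 + (cmod (d n * D n))\<^sup>2)"
    and R: "\<forall>n\<ge>n'. n > 0 \<longrightarrow>
              \<bar>R n\<bar> \<le> \<mu> * real n powr (- \<nu>) * sqrt ((cmod (C n))\<^sup>2 + (cmod (d n * D n))\<^sup>2)"
  shows "integral {0..} (\<lambda>t. kwin T t * (\<bar>\<Sum>n. R (n + n0) * exp (r (n + n0) * t)\<bar>)\<^sup>2)
           \<le> \<epsilon> * pi * T * (\<Sum>n. ((cmod (C (n + n0)))\<^sup>2 + (cmod (d (n + n0) * D (n + n0)))\<^sup>2)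
                                     / (pi\<^sup>2 + T\<^sup>2 * (r (n + n0))\<^sup>2))"
proof -
  define x where "x n = \<mu> * real (n + n0) powr (- \<nu>)" for n
  define a where "a n = (cmod (C (n + n0)))\<^sup>2 + (cmod (d (n + n0) * D (n + n0)))\<^sup>2" for n
  define B where "B = (\<Sum>n. a n / (pi\<^sup>2 + T\<^sup>2 * (r (n + n0))\<^sup>2))"
  have a: "a n \<ge> 0" for n by (simp add: a_def)
  have a_sum: "summable a"
    unfolding a_def using summable_ignore_initial_segment[OF CD, of n0] by simp
  have "integral {0..} (\<lambda>t. kwin T t * (\<bar>\<Sum>n. R (n + n0) * exp (r (n + n0) * t)\<bar>)\<^sup>2)
          \<le> (\<Sum>n. (x n)\<^sup>2) * (2 * pi * T * B)"
    unfolding B_def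
  proof (rule kwin_integral_series_square_le[OF T _ _ a _ a_sum])
    show "r (n + n0) \<le> 0" for n using n0(3) by simp
    show "\<bar>R (n + n0)\<bar> \<le> x n * sqrt (a n)" for n
    proof -
      have "n' \<le> n + n0" "0 < n + n0" using n0(1,2) by simp_all
      with R show ?thesis unfolding x_def a_def by blast
    qed
    show "summable (\<lambda>n. (x n)\<^sup>2)"
      unfolding x_def using summable_ignore_initial_segment[OF summable_square_powr[OF \<nu>]] .
  qed
  also have "\<dots> \<le> \<epsilon> * pi * T * B"
  proof -
    have "B \<ge> 0"
      unfolding B_def using summable_div_pi_sq_plus[OF a_sum a] a by (simp add: suminf_nonneg)
    with tail T have "(2 * (\<Sum>n. (x n)\<^sup>2)) * (pi * T * B) \<le> \<epsilon> * (pi * T * B)"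
      by (intro mult_right_mono) (auto simp: x_def)
    then show ?thesis by (simp add: ac_simps)
  qed
  finally show ?thesis by (simp add: B_def a_def)
qed

theorem lemma5p8:
  fixes r :: "nat \<Rightarrow> real" and chi \<mu> \<nu> :: real and n' :: nat
  assumes "r \<longlonglongrightarrow> chi" and "chi < 0"
    and "\<mu> > 0" and "\<nu> > 1/2"
  shows "\<forall>\<epsilon>::real. 0 < \<epsilon> \<and> \<epsilon> < 1 \<longrightarrow>
    (\<exists>n0::nat. \<forall>T::real. \<forall>R::nat \<Rightarrow> real. \<forall>C D d :: nat \<Rightarrow> complex.
       T > 0
       \<and> summable (\<lambda>n. (cmod (C n))\<^sup>2 + (cmod (d n * D n))\<^sup>2)
       \<and> (\<forall>n\<ge>n'. n > 0 \<longrightarrow>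
             \<bar>R n\<bar> \<le> \<mu> * real n powr (- \<nu>) * sqrt ((cmod (C n))\<^sup>2 + (cmod (d n * D n))\<^sup>2))
       \<longrightarrow>
       integral {0..} (\<lambda>t. kwin T t * (\<bar>\<Sum>n. R (n + n0) * exp (r (n + n0) * t)\<bar>)\<^sup>2)
         \<le> \<epsilon> * pi * T * (\<Sum>n. ((cmod (C (n + n0)))\<^sup>2 + (cmod (d (n + n0) * D (n + n0)))\<^sup>2)
                                   / (pi\<^sup>2 + T\<^sup>2 * (r (n + n0))\<^sup>2)))"
  by (intro allI impI, elim conjE, drule tail_start_exists[OF assms(1,2,4)], elim exE conjE,
      intro exI allI impI, elim conjE) (rule kwin_tail_integral_le[OF _ _ _ assms(4)])

end
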